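(* Let $\ell_n=\Psi(L_n)$, $z_n=\Psi(Z_n)$, $h_n=\Psi(H_n)$. Let $r_L$, $r_Z$, $r_H$ be the largest real roots of $t^5-4t^4-t-1$, $t^7-3t^6-t^5-6t^4-7t^3-7t^2-5t-1$ and $t^7-t^6-7t^5-12t^4-6t^3-7t^2-4t-2$, respectively. Then $\lim_{n\to\infty}\ell_n^{1/n}=r_L\approx 4.01923$, $\lim_{n\to\infty}z_n^{1/n}=r_Z\approx 3.83256$ and $\lim_{n\to\infty}h_n^{1/n}=r_H\approx 3.81063$.
   Context: A matching of a graph is a set of pairwise vertex-disjoint edges; it is maximal if it is not a proper subset of another matching. $\Psi(G)$ is the number of maximal matchings of $G$. A benzenoid system is a connected plane graph without cut-vertices in which every bounded face is a hexagon, any two hexagonal faces being either disjoint or sharing exactly one edge (then they are adjacent). It is catacondensed if no vertex lies in three hexagons, and a benzenoid chain if moreover no hexagon is adjacent to three other hexagons; its length is its number of hexagons. In a chain, the two hexagons adjacent to only one other hexagon are terminal, the rest interior. An interior hexagon has exactly two vertices of degree 2; it is straight if these are non-adjacent and kinky if they are adjacent. $L_n$ is the benzenoid chain of length $n$ with all interior hexagons straight; $Z_n$ is the one with all interior hexagons kinky and successive kinks turning alternately in opposite directions; $H_n$ (helicene) is the one with all interior hexagons kinky and all kinks turning in the same direction (viewed as an abstract graph). *)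

theory Defs
  imports Complex_Main
begin

text \<open>Graphs are given by their edge sets: an edge is a 2-element set of vertices.\<close>

definition is_matching :: "'a set set \<Rightarrow> 'a set set \<Rightarrow> bool" where
  "is_matching E M \<longleftrightarrow> M \<subseteq> E \<and> (\<forall>e\<in>M. \<forall>f\<in>M. e \<noteq> f \<longrightarrow> e \<inter> f = {})"

definition is_maximal_matching :: "'a set set \<Rightarrow> 'a set set \<Rightarrow> bool" where
  "is_maximal_matching E M \<longleftrightarrow> is_matching E M \<and> \<not> (\<exists>M'. is_matching E M' \<and> M \<subset> M')"

definition Psi :: "'a set set \<Rightarrow> nat" where
  "Psi E = card {M. is_maximal_matching E M}"

text \<open>A state consists of the current edge set,
  the vertex cycle of the last hexagon (consistently oriented, its first two vertices
  forming the edge shared with the previous hexagon), and the next fresh vertex.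
  A new hexagon is glued onto the edge (c!k, c!(k+1)) of the last hexagon, k \<in> {2,3,4}:
  k = 3 makes the last hexagon straight, k = 2 / k = 4 make it kinky, turning in
  one / the opposite direction.\<close>

definition attach :: "nat \<Rightarrow> nat set set \<times> nat list \<times> nat \<Rightarrow> nat set set \<times> nat list \<times> nat" where
  "attach k s = (case s of (E, c, m) \<Rightarrow>
     (E \<union> {{c!k, m}, {m, m+1}, {m+1, m+2}, {m+2, m+3}, {m+3, c!(k+1)}},
      [c!(k+1), c!k, m, m+1, m+2, m+3], m + 4))"

definition hex0 :: "nat set set \<times> nat list \<times> nat" where
  "hex0 = ({{0,1},{1,2},{2,3},{3,4},{4,5},{5,0}}, [0,1,2,3,4,5], 6)"

text \<open>Edge set of the chain obtained from one hexagon by successively attaching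
  hexagons with the given codes (a list of length n-1 gives a chain of length n).\<close>
definition chain_graph :: "nat list \<Rightarrow> nat set set" where
  "chain_graph ks = fst (foldl (\<lambda>s k. attach k s) hex0 ks)"

text \<open>The first attachment (to the terminal first hexagon) is arbitrary; we use 3.\<close>
definition L_chain :: "nat \<Rightarrow> nat set set" where
  "L_chain n = chain_graph (replicate (n - 1) 3)"

definition Z_chain :: "nat \<Rightarrow> nat set set" where
  "Z_chain n = chain_graph (map (\<lambda>i. if i = 0 then 3 else if odd i then 2 else 4) [0..<n - 1])"

definition H_chain :: "nat \<Rightarrow> nat set set" where
  "H_chain n = chain_graph (map (\<lambda>i. if i = 0 then 3 else 2) [0..<n - 1])"

definition largest_real_root :: "(real \<Rightarrow> real) \<Rightarrow> real" where
  "largest_real_root f = Max {t. f t = 0}"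

end

theory Submission
  imports Defs "HOL-Computational_Algebra.Polynomial"
begin

text \<open>
  Restricted to the first hexagons, a maximal matching of the whole
  chain is a matching that dominates every edge except possibly the five free edges of the last
  hexagon, and how it can be extended depends only on which of the six vertices of the last hexagon
  it covers. Counting such matchings weighted by a function of this coverage, one attachment turns
  into a linear transfer of the weight on the 64 coverages, and \<open>\<Psi>\<close> is the count for the
  indicator that all free edges are dominated. The tables obtained by iterating the transfer satisfy
  a linear relation, checked by evaluation, so \<open>\<Psi>\<close> satisfies a linear recurrence with nonnegative
  coefficients whose characteristic polynomial is the given one. A positive solution of such a
  recurrence stays between two constant multiples of \<open>r\<^sup>n\<close>, where \<open>r\<close> is the positive root, which is
  the largest real root because \<open>p(t)/t\<^sup>d\<close> increases for \<open>t > 0\<close>.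
\<close>

section \<open>Linear recurrences with nonnegative coefficients\<close>

lemma linear_recurrence_geometric_bounds:
  fixes a cf :: "nat \<Rightarrow> real"
  assumes pos: "\<And>n. 0 < a n" and "0 < d" and cf: "\<And>i. i < d \<Longrightarrow> 0 \<le> cf i"
    and rec: "\<And>n. n0 \<le> n \<Longrightarrow> a (n + d) = (\<Sum>i<d. cf i * a (n + i))"
    and r: "0 < r" "r ^ d = (\<Sum>i<d. cf i * r ^ i)"
  obtains lo hi where "0 < lo" "\<And>n. n0 \<le> n \<Longrightarrow> lo * r ^ n \<le> a n \<and> a n \<le> hi * r ^ n"
proof -
  define W where "W = (\<lambda>n. a n / r ^ n) ` {n0..<n0 + d}"
  have W: "finite W" "W \<noteq> {}" using \<open>0 < d\<close> by (auto simp: W_def)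
  define lo hi where "lo = Min W" and "hi = Max W"
  have "0 < lo" using W pos r(1) by (auto simp: lo_def W_def)
  have "lo * r ^ n \<le> a n \<and> a n \<le> hi * r ^ n" if "n0 \<le> n" for n
    using that
  proof (induction n rule: less_induct)
    case (less n)
    show ?case
    proof (cases "n < n0 + d")
      case True
      with less.prems have "a n / r ^ n \<in> W" by (auto simp: W_def)
      then have "lo \<le> a n / r ^ n" "a n / r ^ n \<le> hi" using W by (auto simp: lo_def hi_def)
      with r(1) show ?thesis by (simp add: field_simps)
    next
      case False
      define m where "m = n - d"
      have n: "n = m + d" "n0 \<le> m" using False by (auto simp: m_def)
      have IH: "lo * r ^ (m + i) \<le> a (m + i) \<and> a (m + i) \<le> hi * r ^ (m + i)" if "i < d" for i
        using less.IH[of "m + i"] n that by auto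
      have scale: "C * r ^ n = (\<Sum>i<d. cf i * (C * r ^ (m + i)))" for C
        using r(2) by (simp add: n power_add sum_distrib_left algebra_simps)
      have "lo * r ^ n \<le> (\<Sum>i<d. cf i * a (m + i))"
        unfolding scale by (rule sum_mono) (use IH cf in \<open>auto intro: mult_left_mono\<close>)
      moreover have "(\<Sum>i<d. cf i * a (m + i)) \<le> hi * r ^ n"
        unfolding scale by (rule sum_mono) (use IH cf in \<open>auto intro: mult_left_mono\<close>)
      ultimately show ?thesis using rec[OF n(2)] n(1) by simp
    qed
  qed
  with \<open>0 < lo\<close> show ?thesis using that by blast
qed

lemma root_tendsto_of_linear_recurrence:
  fixes a cf :: "nat \<Rightarrow> real"
  assumes pos: "\<And>n. 0 < a n" and "0 < d" and cf: "\<And>i. i < d \<Longrightarrow> 0 \<le> cf i"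
    and rec: "\<And>n. n0 \<le> n \<Longrightarrow> a (n + d) = (\<Sum>i<d. cf i * a (n + i))"
    and r: "0 < r" "r ^ d = (\<Sum>i<d. cf i * r ^ i)"
  shows "(\<lambda>n. root n (a n)) \<longlonglongrightarrow> r"
proof -
  obtain lo hi where lo: "0 < lo" and bounds: "\<And>n. n0 \<le> n \<Longrightarrow> lo * r ^ n \<le> a n \<and> a n \<le> hi * r ^ n"
    using linear_recurrence_geometric_bounds[OF assms] by blast
  have "0 < hi * r ^ n0" using pos[of n0] bounds[of n0] by linarith
  with r(1) have "0 < hi" by (simp add: zero_less_mult_iff)
  have "root n (lo * r ^ n) \<le> root n (a n) \<and> root n (a n) \<le> root n (hi * r ^ n)" if "n0 \<le> n" "0 < n" for n
    using bounds[OF that(1)] that(2) by (auto intro: real_root_le_mono)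
  moreover have "root n (C * r ^ n) = root n C * r" if "0 < n" for n and C :: real
    using that r(1) by (simp add: real_root_mult real_root_power_cancel)
  ultimately have "eventually (\<lambda>n. root n lo * r \<le> root n (a n) \<and> root n (a n) \<le> root n hi * r) sequentially"
    unfolding eventually_sequentially by (intro exI[of _ "Suc n0"]) auto
  moreover have "(\<lambda>n. root n C * r) \<longlonglongrightarrow> 1 * r" if "0 < C" for C
    by (intro tendsto_mult LIMSEQ_root_const tendsto_const that)
  ultimately show ?thesis
    using tendsto_sandwich[of "\<lambda>n. root n lo * r" _ _ "\<lambda>n. root n hi * r"] lo \<open>0 < hi\<close>
    by (simp add: eventually_conj_iff)
qed

lemma finite_roots_monic: "finite {t :: real. t ^ d - (\<Sum>i<d. cf i * t ^ i) = 0}"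
proof -
  define p where "p = monom 1 d - (\<Sum>i<d. monom (cf i) i)"
  have poly_p: "poly p t = t ^ d - (\<Sum>i<d. cf i * t ^ i)" for t
    by (simp add: p_def poly_sum poly_monom)
  have "coeff p d = 1"
    by (simp add: p_def coeff_sum coeff_monom)
  then have "p \<noteq> 0" by auto
  with poly_p show ?thesis using poly_roots_finite[of p] by simp
qed

lemma largest_real_root_in_interval:
  fixes cf :: "nat \<Rightarrow> real" and d :: nat
  defines "f \<equiv> \<lambda>t. t ^ d - (\<Sum>i<d. cf i * t ^ i)"
  assumes cf: "\<And>i. i < d \<Longrightarrow> 0 \<le> cf i"
    and lo: "0 < lo" "lo < hi" "f lo < 0" "0 < f hi"
  shows "lo < largest_real_root f \<and> largest_real_root f < hi \<and> f (largest_real_root f) = 0"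
proof -
  define g where "g t = 1 - (\<Sum>i<d. cf i / t ^ (d - i))" for t :: real
  have f_g: "f t = t ^ d * g t" if "0 < t" for t
  proof -
    have "t ^ d * (cf i / t ^ (d - i)) = cf i * t ^ i" if "i < d" for i
    proof -
      have "t ^ d = t ^ i * t ^ (d - i)" using \<open>i < d\<close> by (simp flip: power_add)
      with \<open>0 < t\<close> show ?thesis by (simp add: field_simps)
    qed
    then have "t ^ d * (\<Sum>i<d. cf i / t ^ (d - i)) = (\<Sum>i<d. cf i * t ^ i)"
      by (simp add: sum_distrib_left)
    then show ?thesis by (simp add: f_def g_def right_diff_distrib)
  qed
  have g_mono: "g s \<le> g t" if "0 < s" "s \<le> t" for s t
  proof -
    have "cf i / t ^ (d - i) \<le> cf i / s ^ (d - i)" if "i < d" for i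
      using cf[OF that] \<open>0 < s\<close> \<open>s \<le> t\<close> by (intro divide_left_mono power_mono) auto
    then have "(\<Sum>i<d. cf i / t ^ (d - i)) \<le> (\<Sum>i<d. cf i / s ^ (d - i))"
      by (intro sum_mono) simp
    then show ?thesis by (simp add: g_def)
  qed
  have g_pos: "0 < g t" if "0 < t" "0 < f t" for t
    using f_g[OF that(1)] that by (simp add: zero_less_mult_iff)
  have "continuous_on {lo..hi} f" unfolding f_def by (intro continuous_intros)
  then obtain t0 where t0: "lo \<le> t0" "t0 \<le> hi" "f t0 = 0"
    using IVT'[of f lo 0 hi] lo by auto
  define r where "r = largest_real_root f"
  have fin: "finite {t. f t = 0}" unfolding f_def by (rule finite_roots_monic)
  with t0 have "f r = 0" "t0 \<le> r"
    unfolding r_def largest_real_root_def using Max_in Max_ge by fastforce+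
  moreover have "lo < t0" using t0 lo by (cases "t0 = lo") auto
  ultimately have "lo < r" "g r = 0" using f_g lo(1) by auto
  moreover have "r < hi"
  proof (rule ccontr)
    assume "\<not> r < hi"
    then have "g hi \<le> g r" using g_mono lo by auto
    with \<open>g r = 0\<close> g_pos[of hi] lo show False by simp
  qed
  ultimately show ?thesis using \<open>f r = 0\<close> by (simp add: r_def)
qed

section \<open>Maximal matchings\<close>

lemma maximal_matching_iff_dominating:
  assumes "\<forall>e\<in>E. e \<noteq> {}"
  shows "is_maximal_matching E M \<longleftrightarrow> is_matching E M \<and> (\<forall>e\<in>E. e \<inter> \<Union>M \<noteq> {})"
proof
  assume max: "is_maximal_matching E M"
  then have match: "is_matching E M" by (simp add: is_maximal_matching_def)
  have "e \<inter> \<Union>M \<noteq> {}" if e: "e \<in> E" for e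
  proof
    assume free: "e \<inter> \<Union>M = {}"
    with e assms have "e \<notin> M" by blast
    moreover have "is_matching E (insert e M)"
      using match e free unfolding is_matching_def by blast
    ultimately show False using max unfolding is_maximal_matching_def by blast
  qed
  with match show "is_matching E M \<and> (\<forall>e\<in>E. e \<inter> \<Union>M \<noteq> {})" by blast
next
  assume dom: "is_matching E M \<and> (\<forall>e\<in>E. e \<inter> \<Union>M \<noteq> {})"
  have "\<not> (is_matching E M' \<and> M \<subset> M')" for M'
  proof
    assume "is_matching E M' \<and> M \<subset> M'"
    then obtain e where M': "is_matching E M'" "M \<subset> M'" "e \<in> M'" "e \<notin> M" by blast
    then have "e \<in> E" by (auto simp: is_matching_def)
    then obtain f where f: "f \<in> M" "e \<inter> f \<noteq> {}" using dom by blast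
    with M' have "f \<in> M'" "f \<noteq> e" by auto
    with M'(1,3) f(2) show False unfolding is_matching_def by blast
  qed
  with dom show "is_maximal_matching E M" by (auto simp: is_maximal_matching_def)
qed

lemma Psi_ge_1:
  assumes "finite E"
  shows "1 \<le> Psi E"
proof -
  have fin: "finite {M. is_matching E M}"
    by (rule finite_subset[of _ "Pow E"]) (auto simp: is_matching_def assms)
  have "{} \<in> {M. is_matching E M}" by (simp add: is_matching_def)
  then obtain M where "M \<in> {M. is_matching E M}" "\<forall>M'\<in>{M. is_matching E M}. M \<subseteq> M' \<longrightarrow> M = M'"
    using finite_has_maximal[OF fin] by blast
  then have "is_maximal_matching E M" unfolding is_maximal_matching_def by auto
  moreover have "finite {M. is_maximal_matching E M}"
    by (rule finite_subset[OF _ fin]) (auto simp: is_maximal_matching_def)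
  ultimately have "card {M. is_maximal_matching E M} > 0" by (auto simp: card_gt_0_iff)
  then show ?thesis unfolding Psi_def by simp
qed

section \<open>Almost maximal matchings and the transfer of one attachment\<close>

text \<open>
  Later hexagons are glued to \<open>c!k, c!(k+1)\<close> with \<open>2 \<le> k \<le> 4\<close>, so of the edges present only the
  free edges of the last hexagon can still be dominated by edges added later: maximal matchings of
  a longer chain restrict to almost maximal ones.
\<close>

definition free_edges :: "nat list \<Rightarrow> nat set set" where
  "free_edges c = {{c!i, c!(Suc i mod 6)} | i. 0 < i \<and> i < 6}"

fun wf_state :: "nat set set \<times> nat list \<times> nat \<Rightarrow> bool" where
  "wf_state (E, c, m) \<longleftrightarrow> finite E \<and> (\<forall>e\<in>E. \<exists>u v. u \<noteq> v \<and> e = {u, v}) \<and> (\<forall>e\<in>E. \<forall>v\<in>e. v < m) \<and>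
     length c = 6 \<and> distinct c \<and> (\<forall>i<6. c!i < m) \<and> (\<forall>i<6. {c!i, c!(Suc i mod 6)} \<in> E) \<and>
     (\<forall>e\<in>E. \<forall>j. 2 \<le> j \<and> j < 6 \<and> c!j \<in> e \<longrightarrow> e \<in> free_edges c)"

fun almost_maximal :: "nat set set \<times> nat list \<times> nat \<Rightarrow> nat set set \<Rightarrow> bool" where
  "almost_maximal (E, c, m) M \<longleftrightarrow> is_matching E M \<and> (\<forall>e\<in>E - free_edges c. e \<inter> \<Union>M \<noteq> {})"

definition coverage :: "nat list \<Rightarrow> nat set set \<Rightarrow> bool list" where
  "coverage c M = map (\<lambda>i. c!i \<in> \<Union>M) [0..<6]"

fun weighted_count :: "nat set set \<times> nat list \<times> nat \<Rightarrow> (bool list \<Rightarrow> int) \<Rightarrow> int" where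
  "weighted_count (E, c, m) w = (\<Sum>M | almost_maximal (E, c, m) M. w (coverage c M))"

text \<open>
  A bit vector \<open>x\<close> of length 5 selects edges of the path \<open>c!k, m, m+1, m+2, m+3, c!(k+1)\<close> added by
  \<open>attach k\<close>. It is compatible with the coverage \<open>b\<close> if it avoids covered attachment vertices and
  leaves every edge of the old hexagon, which is no longer free, dominated; \<open>next_coverage\<close> is then
  the coverage of the new hexagon \<open>[c!(k+1), c!k, m, m+1, m+2, m+3]\<close>.
\<close>

definition path_matchings :: "bool list list" where
  "path_matchings =
    [[False,False,False,False,False], [True,False,False,False,False], [False,True,False,False,False],
     [False,False,True,False,False], [False,False,False,True,False], [False,False,False,False,True],
     [True,False,True,False,False], [True,False,False,True,False], [True,False,False,False,True],
     [False,True,False,True,False], [False,True,False,False,True], [False,False,True,False,True],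
     [True,False,True,False,True]]"

definition covered_after :: "nat \<Rightarrow> bool list \<Rightarrow> bool list \<Rightarrow> nat \<Rightarrow> bool" where
  "covered_after k b x i \<longleftrightarrow> b!i \<or> (x!0 \<and> i = k) \<or> (x!4 \<and> i = Suc k)"

definition compatible :: "nat \<Rightarrow> bool list \<Rightarrow> bool list \<Rightarrow> bool" where
  "compatible k b x \<longleftrightarrow> (x!0 \<longrightarrow> \<not> b!k) \<and> (x!4 \<longrightarrow> \<not> b!Suc k) \<and>
     (\<forall>i\<in>set [0..<6]. covered_after k b x i \<or> covered_after k b x (Suc i mod 6))"

definition next_coverage :: "nat \<Rightarrow> bool list \<Rightarrow> bool list \<Rightarrow> bool list" where
  "next_coverage k b x = [b!Suc k \<or> x!4, b!k \<or> x!0, x!0 \<or> x!1, x!1 \<or> x!2, x!2 \<or> x!3, x!3 \<or> x!4]"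

definition transfer :: "nat \<Rightarrow> (bool list \<Rightarrow> int) \<Rightarrow> bool list \<Rightarrow> int" where
  "transfer k w b = (\<Sum>x\<leftarrow>path_matchings. if compatible k b x then w (next_coverage k b x) else 0)"

lemma mem_path_matchings: "x \<in> set path_matchings \<longleftrightarrow> length x = 5 \<and> (\<forall>i<4. \<not> (x!i \<and> x!Suc i))"
proof
  assume "x \<in> set path_matchings"
  then show "length x = 5 \<and> (\<forall>i<4. \<not> (x!i \<and> x!Suc i))"
    by (simp add: path_matchings_def numeral_eq_Suc All_less_Suc) (elim disjE; simp)
next
  assume x: "length x = 5 \<and> (\<forall>i<4. \<not> (x!i \<and> x!Suc i))"
  then obtain x0 x1 x2 x3 x4 where xs: "x = [x0, x1, x2, x3, x4]"
    by (auto simp: length_Suc_conv numeral_eq_Suc)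
  have "\<not> (x!i \<and> x!Suc i)" if "i < 4" for i
    using x that by blast
  from this[of 0] this[of 1] this[of 2] this[of 3]
  have "\<not> (x0 \<and> x1)" "\<not> (x1 \<and> x2)" "\<not> (x2 \<and> x3)" "\<not> (x3 \<and> x4)"
    by (simp_all add: xs numeral_eq_Suc)
  then show "x \<in> set path_matchings"
    unfolding xs path_matchings_def by (cases x0; cases x1; cases x2; cases x3; cases x4) simp_all
qed

lemma free_edges_subset: "\<forall>i<6. {c!i, c!(Suc i mod 6)} \<in> E \<Longrightarrow> free_edges c \<subseteq> E"
  unfolding free_edges_def by auto

lemma distinct_path_matchings: "distinct path_matchings"
  by (simp add: path_matchings_def)

lemma compatible_iff:
  "compatible k b x \<longleftrightarrow> (x!0 \<longrightarrow> \<not> b!k) \<and> (x!4 \<longrightarrow> \<not> b!Suc k) \<and>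
     (\<forall>i<6. covered_after k b x i \<or> covered_after k b x (Suc i mod 6))"
  by (simp add: compatible_def Ball_def)

lemma free_edges_eq: "free_edges c = {{c!1, c!2}, {c!2, c!3}, {c!3, c!4}, {c!4, c!5}, {c!5, c!0}}"
proof -
  have mods: "Suc 1 mod 6 = (2::nat)" "Suc 2 mod 6 = (3::nat)" "Suc 3 mod 6 = (4::nat)"
    "Suc 4 mod 6 = (5::nat)" "Suc 5 mod 6 = (0::nat)" by simp_all
  have "free_edges c = (\<lambda>i. {c!i, c!(Suc i mod 6)}) ` {i. 0 < i \<and> i < 6}"
    unfolding free_edges_def by blast
  also have "{i::nat. 0 < i \<and> i < 6} = {1, 2, 3, 4, 5}" by auto
  also have "(\<lambda>i. {c!i, c!(Suc i mod 6)}) ` {1, 2, 3, 4, 5} =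
      {{c!1, c!2}, {c!2, c!3}, {c!3, c!4}, {c!4, c!5}, {c!5, c!0}}"
    unfolding image_insert image_empty mods ..
  finally show ?thesis .
qed

locale attach_step =
  fixes E :: "nat set set" and c :: "nat list" and m k :: nat
  assumes wf: "wf_state (E, c, m)" and k_bounds: "2 \<le> k" "k \<le> 4"
begin

definition new_edge :: "nat \<Rightarrow> nat set" where
  "new_edge i = (if i = 0 then {c!k, m} else if i = 4 then {m+3, c!Suc k} else {m+i-1, m+i})"

definition new_edges :: "nat set set" where
  "new_edges = new_edge ` {..<5}"

definition new_cycle :: "nat list" where
  "new_cycle = [c!Suc k, c!k, m, m+1, m+2, m+3]"

definition selected :: "bool list \<Rightarrow> nat set set" where
  "selected x = {new_edge i | i. i < 5 \<and> x!i}"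

lemma finite_E: "finite E" and doubleton_E: "e \<in> E \<Longrightarrow> \<exists>u v. u \<noteq> v \<and> e = {u, v}"
  and vertex_less: "e \<in> E \<Longrightarrow> v \<in> e \<Longrightarrow> v < m"
  and length_c: "length c = 6" and distinct_c: "distinct c"
  and cycle_vertex_less: "i < 6 \<Longrightarrow> c!i < m"
  and cycle_edge: "i < 6 \<Longrightarrow> {c!i, c!(Suc i mod 6)} \<in> E"
  and inner_vertex_edge: "e \<in> E \<Longrightarrow> 2 \<le> j \<Longrightarrow> j < 6 \<Longrightarrow> c!j \<in> e \<Longrightarrow> e \<in> free_edges c"
  using wf by auto

lemma cycle_nth_eq_iff: "i < 6 \<Longrightarrow> j < 6 \<Longrightarrow> c!i = c!j \<longleftrightarrow> i = j"
  using distinct_c length_c by (simp add: nth_eq_iff_index_eq)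

lemma attach_vertices: "c!k < m" "c!Suc k < m" "c!k \<noteq> c!Suc k"
  using cycle_vertex_less k_bounds cycle_nth_eq_iff[of k "Suc k"] by auto

lemma old_vertex_in_new_edge:
  "v < m \<Longrightarrow> i < 5 \<Longrightarrow> v \<in> new_edge i \<longleftrightarrow> (i = 0 \<and> v = c!k) \<or> (i = 4 \<and> v = c!Suc k)"
  by (auto simp: new_edge_def)

lemma new_vertex_in_new_edge: "t < 4 \<Longrightarrow> i < 5 \<Longrightarrow> m + t \<in> new_edge i \<longleftrightarrow> i = t \<or> i = Suc t"
  using attach_vertices by (auto simp: new_edge_def)

lemma new_edge_vertices:
  "v \<in> new_edge i \<Longrightarrow> i < 5 \<Longrightarrow> v = c!k \<or> v = c!Suc k \<or> (\<exists>t<4. v = m + t)"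
  unfolding new_edge_def
  by (cases "i = 0"; cases "i = 4") (auto intro: exI[of _ "i - 1"] exI[of _ i] exI[of _ 3] exI[of _ 0])

lemma new_edge_notin_E: "i < 5 \<Longrightarrow> new_edge i \<notin> E"
proof
  assume "i < 5" "new_edge i \<in> E"
  moreover have "m + 3 \<in> new_edge i \<or> m \<in> new_edge i \<or> m + 1 \<in> new_edge i"
    using \<open>i < 5\<close> by (auto simp: new_edge_def)
  ultimately show False using vertex_less by fastforce
qed

lemma new_edges_disjoint_E: "new_edges \<inter> E = {}"
  using new_edge_notin_E by (auto simp: new_edges_def)

lemma new_edges_Int:
  assumes "i < 5" "j < 5" "i \<noteq> j" "j \<noteq> Suc i" "i \<noteq> Suc j"
  shows "new_edge i \<inter> new_edge j = {}"
proof (rule ccontr)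
  assume "new_edge i \<inter> new_edge j \<noteq> {}"
  then obtain v where v: "v \<in> new_edge i" "v \<in> new_edge j" by blast
  show False
  proof (cases "v < m")
    case True
    then show False
      using old_vertex_in_new_edge[OF True \<open>i < 5\<close>] old_vertex_in_new_edge[OF True \<open>j < 5\<close>]
        v attach_vertices assms by auto
  next
    case False
    then obtain t where "t < 4" "v = m + t" using new_edge_vertices[OF v(1) \<open>i < 5\<close>] attach_vertices by auto
    then show False using new_vertex_in_new_edge[of t i] new_vertex_in_new_edge[of t j] v assms by auto
  qed
qed

lemma new_edge_inj:
  assumes "i < 5" "j < 5" "new_edge i = new_edge j"
  shows "i = j"
proof -
  have "(i = t \<or> i = Suc t) \<longleftrightarrow> (j = t \<or> j = Suc t)" if "t < 4" for t
    using new_vertex_in_new_edge[OF that] assms by metis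
  from this[of 0] this[of 1] this[of 2] this[of 3] assms(1,2) show ?thesis by arith
qed

lemma new_edge_adjacent: "i < 4 \<Longrightarrow> m + i \<in> new_edge i \<inter> new_edge (Suc i)"
  using new_vertex_in_new_edge[of i i] new_vertex_in_new_edge[of i "Suc i"] by auto

lemma new_edge_doubleton: "\<exists>u v. u \<noteq> v \<and> new_edge i = {u, v}"
proof -
  have "a \<noteq> b \<Longrightarrow> \<exists>u v. u \<noteq> v \<and> {a, b} = {u, v}" for a b :: nat by blast
  then show ?thesis using attach_vertices by (simp add: new_edge_def)
qed

lemma free_edges_new_cycle: "free_edges new_cycle = new_edges"
proof -
  have "free_edges new_cycle = (\<lambda>i. new_edge (i - 1)) ` {1, 2, 3, 4, 5}"
    by (simp add: free_edges_eq new_cycle_def new_edge_def insert_commute)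
  also have "\<dots> = new_edge ` {0, 1, 2, 3, 4}" by simp
  also have "{0, 1, 2, 3, 4} = {..<5::nat}" by auto
  finally show ?thesis by (simp add: new_edges_def)
qed

lemma attach_eq: "attach k (E, c, m) = (E \<union> new_edges, new_cycle, m + 4)"
proof -
  have "new_edges = new_edge ` {0, 1, 2, 3, 4}"
    unfolding new_edges_def by (rule arg_cong[where f = "image new_edge"]) auto
  then have "new_edges = {{c!k, m}, {m, m+1}, {m+1, m+2}, {m+2, m+3}, {m+3, c!(k+1)}}"
    by (simp add: new_edge_def insert_commute)
  then show ?thesis by (simp add: attach_def new_cycle_def)
qed

lemma wf_attach: "wf_state (attach k (E, c, m))"
proof -
  have vertices: "v < m + 4" if "e \<in> E \<union> new_edges" "v \<in> e" for e v
    using that vertex_less new_edge_vertices attach_vertices by (fastforce simp: new_edges_def)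
  have cycle: "{new_cycle!i, new_cycle!(Suc i mod 6)} \<in> E \<union> new_edges" if "i < 6" for i
  proof (cases "i = 0")
    case True
    have "{c!k, c!Suc k} \<in> E" using cycle_edge[of k] k_bounds by simp
    with True show ?thesis by (simp add: new_cycle_def insert_commute)
  next
    case False
    with that have "{new_cycle!i, new_cycle!(Suc i mod 6)} \<in> free_edges new_cycle"
      unfolding free_edges_def by blast
    then show ?thesis by (simp add: free_edges_new_cycle)
  qed
  have inner: "e \<in> free_edges new_cycle"
    if "e \<in> E \<union> new_edges" "2 \<le> j" "j < 6" "new_cycle!j \<in> e" for e j
  proof -
    have "m \<le> new_cycle!j"
      using that(2,3) by (auto simp: new_cycle_def less_Suc_eq numeral_eq_Suc)
    with that vertex_less show ?thesis by (fastforce simp: free_edges_new_cycle)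
  qed
  have "distinct new_cycle" "\<forall>i<6. new_cycle!i < m + 4"
    using attach_vertices by (auto simp: new_cycle_def less_Suc_eq numeral_eq_Suc)
  with vertices cycle inner finite_E doubleton_E new_edge_doubleton show ?thesis
    by (auto simp: attach_eq new_cycle_def new_edges_def)
qed

lemma coverage_nth: "i < 6 \<Longrightarrow> coverage c M ! i \<longleftrightarrow> c!i \<in> \<Union>M"
  by (simp add: coverage_def)

lemma mem_Union_selected: "v \<in> \<Union>(selected x) \<longleftrightarrow> (\<exists>i<5. x!i \<and> v \<in> new_edge i)"
  by (auto simp: selected_def)

lemma new_edge_in_selected: "i < 5 \<Longrightarrow> new_edge i \<in> selected x \<longleftrightarrow> x!i"
  using new_edge_inj by (auto simp: selected_def)

lemma selected_subset: "selected x \<subseteq> new_edges"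
  by (auto simp: selected_def new_edges_def)

lemma new_vertex_covered:
  assumes "M \<subseteq> E" "t < 4"
  shows "m + t \<in> \<Union>(M \<union> selected x) \<longleftrightarrow> x!t \<or> x!Suc t"
proof -
  have "m + t \<notin> \<Union>M" using assms(1) vertex_less by fastforce
  moreover have "(\<exists>i<5. x!i \<and> m + t \<in> new_edge i) \<longleftrightarrow> x!t \<or> x!Suc t"
  proof
    assume "\<exists>i<5. x!i \<and> m + t \<in> new_edge i"
    then show "x!t \<or> x!Suc t" using new_vertex_in_new_edge[OF assms(2)] by auto
  next
    assume "x!t \<or> x!Suc t"
    moreover have "t < 5" "Suc t < 5" using assms(2) by simp_all
    ultimately show "\<exists>i<5. x!i \<and> m + t \<in> new_edge i"
      using new_vertex_in_new_edge[OF assms(2)] by blast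
  qed
  ultimately show ?thesis using mem_Union_selected by auto
qed

lemma attach_vertex_covered:
  assumes "M \<subseteq> E"
  shows "c!k \<in> \<Union>(M \<union> selected x) \<longleftrightarrow> c!k \<in> \<Union>M \<or> x!0"
    and "c!Suc k \<in> \<Union>(M \<union> selected x) \<longleftrightarrow> c!Suc k \<in> \<Union>M \<or> x!4"
proof -
  have "(\<exists>i<5. x!i \<and> c!k \<in> new_edge i) \<longleftrightarrow> x!0"
  proof
    assume "\<exists>i<5. x!i \<and> c!k \<in> new_edge i"
    then show "x!0" using old_vertex_in_new_edge[OF attach_vertices(1)] attach_vertices by auto
  next
    assume "x!0"
    then show "\<exists>i<5. x!i \<and> c!k \<in> new_edge i" by (intro exI[of _ 0]) (simp add: new_edge_def)
  qed
  then show "c!k \<in> \<Union>(M \<union> selected x) \<longleftrightarrow> c!k \<in> \<Union>M \<or> x!0"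
    using mem_Union_selected by auto
  have "(\<exists>i<5. x!i \<and> c!Suc k \<in> new_edge i) \<longleftrightarrow> x!4"
  proof
    assume "\<exists>i<5. x!i \<and> c!Suc k \<in> new_edge i"
    then show "x!4" using old_vertex_in_new_edge[OF attach_vertices(2)] attach_vertices by auto
  next
    assume "x!4"
    then show "\<exists>i<5. x!i \<and> c!Suc k \<in> new_edge i" by (intro exI[of _ 4]) (simp add: new_edge_def)
  qed
  then show "c!Suc k \<in> \<Union>(M \<union> selected x) \<longleftrightarrow> c!Suc k \<in> \<Union>M \<or> x!4"
    using mem_Union_selected by auto
qed

lemma coverage_extend:
  assumes "M \<subseteq> E"
  shows "coverage new_cycle (M \<union> selected x) = next_coverage k (coverage c M) x"
proof -
  have "m + t \<in> \<Union>(M \<union> selected x) \<longleftrightarrow> x!t \<or> x!Suc t" if "t < 4" for t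
    using new_vertex_covered[OF assms that] .
  from this[of 0] this[of 1] this[of 2] this[of 3]
  have "m \<in> \<Union>(M \<union> selected x) \<longleftrightarrow> x!0 \<or> x!1" "m + 1 \<in> \<Union>(M \<union> selected x) \<longleftrightarrow> x!1 \<or> x!2"
    "m + 2 \<in> \<Union>(M \<union> selected x) \<longleftrightarrow> x!2 \<or> x!3" "m + 3 \<in> \<Union>(M \<union> selected x) \<longleftrightarrow> x!3 \<or> x!4"
    by (simp_all add: numeral_eq_Suc)
  moreover have "coverage c M ! k \<longleftrightarrow> c!k \<in> \<Union>M" "coverage c M ! Suc k \<longleftrightarrow> c!Suc k \<in> \<Union>M"
    using coverage_nth k_bounds by auto
  ultimately show ?thesis
    using attach_vertex_covered[OF assms]
    by (simp add: coverage_def next_coverage_def new_cycle_def upt_rec)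
qed

lemma old_new_disjoint:
  assumes "M \<subseteq> E" "compatible k (coverage c M) x" "e \<in> M" "i < 5" "x!i"
  shows "e \<inter> new_edge i = {}"
proof (rule ccontr)
  assume "e \<inter> new_edge i \<noteq> {}"
  then obtain v where v: "v \<in> e" "v \<in> new_edge i" by blast
  with assms have "v < m" using vertex_less by blast
  with v assms have "(i = 0 \<and> v = c!k) \<or> (i = 4 \<and> v = c!Suc k)"
    using old_vertex_in_new_edge by blast
  moreover have "coverage c M ! k \<longleftrightarrow> c!k \<in> \<Union>M" "coverage c M ! Suc k \<longleftrightarrow> c!Suc k \<in> \<Union>M"
    using coverage_nth k_bounds by auto
  ultimately show False using assms v unfolding compatible_def by auto
qed

lemma selected_disjoint:
  assumes "x \<in> set path_matchings" "i < 5" "j < 5" "x!i" "x!j" "i \<noteq> j"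
  shows "new_edge i \<inter> new_edge j = {}"
proof -
  have no_adjacent: "\<not> (x!t \<and> x!Suc t)" if "t < 4" for t
    using assms(1) that by (simp add: mem_path_matchings)
  have "j \<noteq> Suc i" "i \<noteq> Suc j"
    using assms(2-5) no_adjacent[of i] no_adjacent[of j] by auto
  with assms show ?thesis using new_edges_Int by blast
qed

lemma covered_after_covered:
  assumes "M \<subseteq> E" "j < 6" "covered_after k (coverage c M) x j"
  shows "c!j \<in> \<Union>(M \<union> selected x)"
  using assms attach_vertex_covered[OF assms(1), of x] coverage_nth[OF assms(2)]
  by (auto simp: covered_after_def)

lemma is_matching_extend:
  assumes M: "is_matching E M" and x: "x \<in> set path_matchings"
    and comp: "compatible k (coverage c M) x"
  shows "is_matching (E \<union> new_edges) (M \<union> selected x)"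
proof -
  have ME: "M \<subseteq> E" and M_disj: "\<forall>e\<in>M. \<forall>f\<in>M. e \<noteq> f \<longrightarrow> e \<inter> f = {}"
    using M by (auto simp: is_matching_def)
  have "e \<inter> f = {}" if ef: "e \<in> M \<union> selected x" "f \<in> M \<union> selected x" "e \<noteq> f" for e f
  proof (cases "e \<in> M"; cases "f \<in> M")
    assume "e \<in> M" "f \<in> M"
    with M_disj ef show ?thesis by blast
  next
    assume "e \<in> M" "f \<notin> M"
    then obtain j where "j < 5" "x!j" "f = new_edge j" using ef by (auto simp: selected_def)
    with old_new_disjoint[OF ME comp \<open>e \<in> M\<close>] show ?thesis by blast
  next
    assume "e \<notin> M" "f \<in> M"
    then obtain i where "i < 5" "x!i" "e = new_edge i" using ef by (auto simp: selected_def)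
    with old_new_disjoint[OF ME comp \<open>f \<in> M\<close>] show ?thesis by blast
  next
    assume "e \<notin> M" "f \<notin> M"
    then obtain i j where "i < 5" "x!i" "e = new_edge i" "j < 5" "x!j" "f = new_edge j"
      using ef by (auto simp: selected_def)
    with selected_disjoint[OF x] ef show ?thesis by blast
  qed
  then show ?thesis using ME selected_subset[of x] by (auto simp: is_matching_def)
qed

lemma almost_maximal_extend:
  assumes am: "almost_maximal (E, c, m) M" and x: "x \<in> set path_matchings"
    and comp: "compatible k (coverage c M) x"
  shows "almost_maximal (E \<union> new_edges, new_cycle, m + 4) (M \<union> selected x)"
proof -
  have M: "is_matching E M" and M_dom: "\<forall>e\<in>E - free_edges c. e \<inter> \<Union>M \<noteq> {}"
    using am by auto
  then have ME: "M \<subseteq> E" by (simp add: is_matching_def)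
  have "e \<inter> \<Union>(M \<union> selected x) \<noteq> {}" if e: "e \<in> E \<union> new_edges - free_edges new_cycle" for e
  proof (cases "e \<in> free_edges c")
    case False
    with e M_dom show ?thesis by (auto simp: free_edges_new_cycle)
  next
    case True
    then obtain i where i: "i < 6" "e = {c!i, c!(Suc i mod 6)}" unfolding free_edges_def by blast
    have "covered_after k (coverage c M) x i \<or> covered_after k (coverage c M) x (Suc i mod 6)"
      using comp i(1) by (simp add: compatible_iff)
    moreover have "Suc i mod 6 < 6" by simp
    ultimately have "c!i \<in> \<Union>(M \<union> selected x) \<or> c!(Suc i mod 6) \<in> \<Union>(M \<union> selected x)"
      using covered_after_covered[OF ME] i(1) by blast
    with i(2) show ?thesis by blast
  qed
  with is_matching_extend[OF M x comp] show ?thesis by simp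
qed

definition selection_of :: "nat set set \<Rightarrow> bool list" where
  "selection_of M' = map (\<lambda>i. new_edge i \<in> M') [0..<5]"

lemma selection_of_nth: "i < 5 \<Longrightarrow> selection_of M' ! i \<longleftrightarrow> new_edge i \<in> M'"
  by (simp add: selection_of_def)

lemma restrict_Un_selected:
  assumes "M' \<subseteq> E \<union> new_edges"
  shows "M' = (M' \<inter> E) \<union> selected (selection_of M')"
proof
  show "M' \<subseteq> (M' \<inter> E) \<union> selected (selection_of M')"
  proof
    fix f assume "f \<in> M'"
    show "f \<in> (M' \<inter> E) \<union> selected (selection_of M')"
    proof (cases "f \<in> E")
      case False
      with assms \<open>f \<in> M'\<close> obtain i where "i < 5" "f = new_edge i" by (auto simp: new_edges_def)
      with \<open>f \<in> M'\<close> show ?thesis by (auto simp: selected_def selection_of_nth)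
    qed (use \<open>f \<in> M'\<close> in blast)
  qed
qed (auto simp: selected_def selection_of_nth)

context
  fixes M'
  assumes am': "almost_maximal (E \<union> new_edges, new_cycle, m + 4) M'"
begin

lemma M'_matching: "M' \<subseteq> E \<union> new_edges" "\<And>e f. e \<in> M' \<Longrightarrow> f \<in> M' \<Longrightarrow> e \<noteq> f \<Longrightarrow> e \<inter> f = {}"
  and M'_dominates: "\<And>e. e \<in> E \<union> new_edges - new_edges \<Longrightarrow> e \<inter> \<Union>M' \<noteq> {}"
  using am' by (auto simp: is_matching_def free_edges_new_cycle)

lemma dominating_new_edge:
  assumes "v < m" "f \<in> M'" "v \<in> f" "f \<notin> E"
  shows "(v = c!k \<and> selection_of M' ! 0) \<or> (v = c!Suc k \<and> selection_of M' ! 4)"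
proof -
  obtain t where t: "t < 5" "f = new_edge t"
    using M'_matching(1) assms(2,4) by (auto simp: new_edges_def)
  with assms have "(t = 0 \<and> v = c!k) \<or> (t = 4 \<and> v = c!Suc k)"
    using old_vertex_in_new_edge by blast
  with t assms(2) show ?thesis by (auto simp: selection_of_nth)
qed

lemma almost_maximal_restrict: "almost_maximal (E, c, m) (M' \<inter> E)"
proof -
  have "e \<inter> \<Union>(M' \<inter> E) \<noteq> {}" if e: "e \<in> E - free_edges c" for e
  proof -
    have "e \<notin> new_edges" using e new_edges_disjoint_E by auto
    with e obtain v f where vf: "v \<in> e" "f \<in> M'" "v \<in> f" using M'_dominates by blast
    show ?thesis
    proof (cases "f \<in> E")
      case False
      moreover have "v < m" using vertex_less e vf(1) by blast
      ultimately have "v = c!k \<or> v = c!Suc k" using dominating_new_edge vf(2,3) by blast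
      then have "e \<in> free_edges c"
        using inner_vertex_edge[of e k] inner_vertex_edge[of e "Suc k"] k_bounds e vf(1) by auto
      with e show ?thesis by blast
    qed (use vf in blast)
  qed
  then show ?thesis using M'_matching by (auto simp: is_matching_def)
qed

lemma selection_in_path_matchings: "selection_of M' \<in> set path_matchings"
proof -
  have "\<not> (selection_of M' ! i \<and> selection_of M' ! Suc i)" if "i < 4" for i
  proof
    assume "selection_of M' ! i \<and> selection_of M' ! Suc i"
    with that have "new_edge i \<in> M'" "new_edge (Suc i) \<in> M'" by (simp_all add: selection_of_nth)
    moreover have "new_edge i \<noteq> new_edge (Suc i)" using new_edge_inj[of i "Suc i"] that by auto
    ultimately show False using M'_matching(2) new_edge_adjacent[OF that] by blast
  qed
  then show ?thesis by (simp add: mem_path_matchings selection_of_def)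
qed

lemma selection_compatible: "compatible k (coverage c (M' \<inter> E)) (selection_of M')"
  unfolding compatible_iff
proof (intro conjI impI notI allI)
  let ?b = "coverage c (M' \<inter> E)" and ?x = "selection_of M'"
  have b: "?b ! k \<longleftrightarrow> c!k \<in> \<Union>(M' \<inter> E)" "?b ! Suc k \<longleftrightarrow> c!Suc k \<in> \<Union>(M' \<inter> E)"
    using coverage_nth k_bounds by auto
  show False if "?x ! 0" "?b ! k"
  proof -
    from that b obtain f where f: "f \<in> M' \<inter> E" "c!k \<in> f" by auto
    moreover have "new_edge 0 \<in> M'" "c!k \<in> new_edge 0" "new_edge 0 \<noteq> f"
      using that(1) f(1) new_edge_notin_E[of 0] by (auto simp: selection_of_nth new_edge_def)
    ultimately show False using M'_matching(2) by blast
  qed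
  show False if "?x ! 4" "?b ! Suc k"
  proof -
    from that b obtain f where f: "f \<in> M' \<inter> E" "c!Suc k \<in> f" by auto
    moreover have "new_edge 4 \<in> M'" "c!Suc k \<in> new_edge 4" "new_edge 4 \<noteq> f"
      using that(1) f(1) new_edge_notin_E[of 4] by (auto simp: selection_of_nth new_edge_def)
    ultimately show False using M'_matching(2) by blast
  qed
  fix i :: nat assume i: "i < 6"
  have covered: "covered_after k ?b ?x j" if "j < 6" "f \<in> M'" "c!j \<in> f" for j f
  proof (cases "f \<in> E")
    case True
    with that show ?thesis using coverage_nth by (auto simp: covered_after_def)
  next
    case False
    with that have "(c!j = c!k \<and> ?x ! 0) \<or> (c!j = c!Suc k \<and> ?x ! 4)"
      using dominating_new_edge cycle_vertex_less by blast
    with that show ?thesis using cycle_nth_eq_iff k_bounds by (auto simp: covered_after_def)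
  qed
  have "{c!i, c!(Suc i mod 6)} \<in> E - new_edges" using cycle_edge[OF i] new_edges_disjoint_E by auto
  then obtain f v where "f \<in> M'" "v \<in> f" "v = c!i \<or> v = c!(Suc i mod 6)"
    using M'_dominates by blast
  with i show "covered_after k ?b ?x i \<or> covered_after k ?b ?x (Suc i mod 6)"
    using covered[of i f] covered[of "Suc i mod 6" f] by auto
qed

end

lemma extend_inj:
  assumes "M1 \<subseteq> E" "M2 \<subseteq> E" "length x1 = 5" "length x2 = 5"
    and eq: "M1 \<union> selected x1 = M2 \<union> selected x2"
  shows "M1 = M2 \<and> x1 = x2"
proof
  have "M1 = (M1 \<union> selected x1) \<inter> E" "M2 = (M2 \<union> selected x2) \<inter> E"
    using assms(1,2) selected_subset new_edges_disjoint_E by blast+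
  with eq show "M1 = M2" by simp
  have "x1!i = x2!i" if "i < 5" for i
  proof -
    have "new_edge i \<notin> M1" "new_edge i \<notin> M2" using new_edge_notin_E that assms(1,2) by auto
    with eq show ?thesis using new_edge_in_selected[OF that] by blast
  qed
  with assms(3,4) show "x1 = x2" by (simp add: nth_equalityI)
qed

lemma finite_almost_maximal: "finite {M. almost_maximal (E, c, m) M}"
  by (rule finite_subset[of _ "Pow E"]) (auto simp: is_matching_def finite_E)

definition extension_pairs :: "(nat set set \<times> bool list) set" where
  "extension_pairs = Sigma {M. almost_maximal (E, c, m) M}
    (\<lambda>M. {x \<in> set path_matchings. compatible k (coverage c M) x})"

lemma almost_maximal_attach_eq_image:
  "{M'. almost_maximal (E \<union> new_edges, new_cycle, m + 4) M'} = (\<lambda>(M, x). M \<union> selected x) ` extension_pairs"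
proof (intro equalityI subsetI)
  fix M' assume "M' \<in> {M'. almost_maximal (E \<union> new_edges, new_cycle, m + 4) M'}"
  then have am': "almost_maximal (E \<union> new_edges, new_cycle, m + 4) M'" by simp
  have "(M' \<inter> E, selection_of M') \<in> extension_pairs"
    using almost_maximal_restrict[OF am'] selection_in_path_matchings[OF am']
      selection_compatible[OF am'] by (simp add: extension_pairs_def)
  moreover have "M' = (\<lambda>(M, x). M \<union> selected x) (M' \<inter> E, selection_of M')"
    unfolding prod.case by (rule restrict_Un_selected[OF M'_matching(1)[OF am']])
  ultimately show "M' \<in> (\<lambda>(M, x). M \<union> selected x) ` extension_pairs" by (rule rev_image_eqI)
qed (auto simp: extension_pairs_def almost_maximal_extend simp del: almost_maximal.simps)

lemma inj_on_extension_pairs: "inj_on (\<lambda>(M, x). M \<union> selected x) extension_pairs"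
proof (rule inj_onI)
  fix p q assume "p \<in> extension_pairs" "q \<in> extension_pairs"
    "(\<lambda>(M, x). M \<union> selected x) p = (\<lambda>(M, x). M \<union> selected x) q"
  then show "p = q"
    using extend_inj[of "fst p" "fst q" "snd p" "snd q"]
    by (auto simp: extension_pairs_def is_matching_def mem_path_matchings prod_eq_iff split: prod.splits)
qed

lemma weighted_count_attach: "weighted_count (attach k (E, c, m)) w = weighted_count (E, c, m) (transfer k w)"
proof -
  have "weighted_count (attach k (E, c, m)) w =
      (\<Sum>(M, x)\<in>extension_pairs. w (coverage new_cycle (M \<union> selected x)))"
    using sum.reindex[OF inj_on_extension_pairs]
    by (simp add: attach_eq almost_maximal_attach_eq_image comp_def case_prod_unfold)
  also have "\<dots> = (\<Sum>(M, x)\<in>extension_pairs. w (next_coverage k (coverage c M) x))"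
    by (rule sum.cong) (auto simp: extension_pairs_def is_matching_def coverage_extend)
  also have "\<dots> = (\<Sum>M | almost_maximal (E, c, m) M.
      \<Sum>x\<in>{x \<in> set path_matchings. compatible k (coverage c M) x}. w (next_coverage k (coverage c M) x))"
    unfolding extension_pairs_def by (rule sum.Sigma[symmetric]) (auto simp: finite_almost_maximal)
  also have "\<dots> = weighted_count (E, c, m) (transfer k w)"
  proof -
    have "(\<Sum>x\<in>{x \<in> set path_matchings. compatible k b x}. w (next_coverage k b x)) = transfer k w b" for b
      by (simp add: transfer_def sum.inter_filter sum_list_distinct_conv_sum_set[OF distinct_path_matchings])
    then show ?thesis by (simp del: almost_maximal.simps)
  qed
  finally show ?thesis .
qed

end

lemma wf_state_attach:
  assumes "wf_state s" "k \<in> {2..4}"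
  shows "wf_state (attach k s)"
proof -
  obtain E c m where s: "s = (E, c, m)" by (cases s)
  interpret attach_step E c m k using assms s by unfold_locales auto
  show ?thesis using wf_attach s by simp
qed

lemma weighted_count_attach_transfer:
  assumes "wf_state s" "k \<in> {2..4}"
  shows "weighted_count (attach k s) w = weighted_count s (transfer k w)"
proof -
  obtain E c m where s: "s = (E, c, m)" by (cases s)
  interpret attach_step E c m k using assms s by unfold_locales auto
  show ?thesis using weighted_count_attach s by simp
qed

lemma wf_hex0: "wf_state hex0"
proof -
  let ?c = "[0, 1, 2, 3, 4, 5 :: nat]" and ?E = "{{0,1}, {1,2}, {2,3}, {3,4}, {4,5}, {5,0 :: nat}}"
  have all6: "(\<forall>i<6. P i) \<longleftrightarrow> P 0 \<and> P 1 \<and> P 2 \<and> P 3 \<and> P 4 \<and> P 5" for P :: "nat \<Rightarrow> bool"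
  proof -
    have "(\<forall>i<6. P i) \<longleftrightarrow> (\<forall>i\<in>{..<6}. P i)" by auto
    then show ?thesis by (auto simp: lessThan_nat_numeral)
  qed
  have cycle: "\<forall>i<6. {?c!i, ?c!(Suc i mod 6)} \<in> ?E" and vertices: "\<forall>i<6. ?c!i < 6"
    unfolding all6 by simp_all
  have doubleton: "\<forall>e\<in>?E. \<exists>u v. u \<noteq> v \<and> e = {u, v}"
  proof -
    have "a \<noteq> b \<Longrightarrow> \<exists>u v. u \<noteq> v \<and> {a, b} = {u, v}" for a b :: nat by blast
    then show ?thesis by simp
  qed
  have bound: "\<forall>e\<in>?E. \<forall>v\<in>e. v < 6" by simp
  have inner: "\<forall>e\<in>?E. \<forall>j. 2 \<le> j \<and> j < 6 \<and> ?c!j \<in> e \<longrightarrow> e \<in> free_edges ?c"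
  proof (intro ballI allI impI)
    fix e j assume e: "e \<in> ?E" and j: "2 \<le> j \<and> j < 6 \<and> ?c!j \<in> e"
    have "\<forall>j<6. ?c!j = j" unfolding all6 by simp
    with j have "?c!j = j" by blast
    with j have "j \<in> e" by metis
    with j have "e \<noteq> {0, 1}" by auto
    moreover have "free_edges ?c = {{1,2}, {2,3}, {3,4}, {4,5}, {5,0}}"
      by (simp add: free_edges_eq)
    ultimately show "e \<in> free_edges ?c" using e by blast
  qed
  have "finite ?E" "length ?c = 6" "distinct ?c" by simp_all
  with cycle vertices doubleton bound inner show ?thesis
    unfolding hex0_def wf_state.simps by (intro conjI)
qed

definition all_free_dominated :: "bool list \<Rightarrow> int" where
  "all_free_dominated b = of_bool ((b!1 \<or> b!2) \<and> (b!2 \<or> b!3) \<and> (b!3 \<or> b!4) \<and> (b!4 \<or> b!5) \<and> (b!5 \<or> b!0))"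

lemma all_free_dominated_coverage:
  "all_free_dominated (coverage c M) = of_bool (\<forall>e\<in>free_edges c. e \<inter> \<Union>M \<noteq> {})"
proof -
  have "[0..<6] = [0, 1, 2, 3, 4, 5 :: nat]" by (simp add: upt_rec)
  then show ?thesis
    unfolding all_free_dominated_def free_edges_eq coverage_def by auto
qed

lemma Psi_eq_weighted_count:
  assumes "wf_state s"
  shows "int (Psi (fst s)) = weighted_count s all_free_dominated"
proof -
  obtain E c m where s: "s = (E, c, m)" by (cases s)
  with assms have wf: "wf_state (E, c, m)" by simp
  then have "finite E" by simp
  from wf have nonempty: "\<forall>e\<in>E. e \<noteq> {}" by fastforce
  from wf have "free_edges c \<subseteq> E" by (simp add: free_edges_subset)
  have fin: "finite {M. almost_maximal s M}"
  proof (rule finite_subset)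
    show "{M. almost_maximal s M} \<subseteq> Pow E"
      unfolding s almost_maximal.simps is_matching_def by blast
  qed (simp add: \<open>finite E\<close>)
  have "{M. almost_maximal s M \<and> (\<forall>e\<in>free_edges c. e \<inter> \<Union>M \<noteq> {})} = {M. is_maximal_matching E M}"
    unfolding s almost_maximal.simps maximal_matching_iff_dominating[OF nonempty]
    using \<open>free_edges c \<subseteq> E\<close> by blast
  then have "weighted_count s all_free_dominated = int (card {M. is_maximal_matching E M})"
    using fin by (simp add: s all_free_dominated_coverage of_bool_def sum.If_cases Collect_conj_eq del: almost_maximal.simps)
  then show ?thesis by (simp add: Psi_def s)
qed

definition chain_state :: "(nat \<Rightarrow> nat) \<Rightarrow> nat \<Rightarrow> nat set set \<times> nat list \<times> nat" where
  "chain_state kf n = foldl (\<lambda>s k. attach k s) hex0 (map kf [0..<n])"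

lemma chain_state_Suc: "chain_state kf (Suc n) = attach (kf n) (chain_state kf n)"
  by (simp add: chain_state_def)

lemma fst_chain_state: "fst (chain_state kf n) = chain_graph (map kf [0..<n])"
  by (simp add: chain_state_def chain_graph_def)

lemma wf_chain_state:
  assumes "\<And>i. kf i \<in> {2..4}"
  shows "wf_state (chain_state kf n)"
proof (induction n)
  case (Suc n)
  then show ?case using wf_state_attach assms by (simp add: chain_state_Suc)
qed (simp add: chain_state_def wf_hex0)

section \<open>Transfer tables\<close>

text \<open>
  A weight on coverages is stored as the list of its 64 values, indexed by \<open>state_index\<close>, the order of
  \<open>List.n_lists\<close>. In \<open>code_table ks\<close> the last code of \<open>ks\<close> is transferred first.
\<close>

fun state_index :: "bool list \<Rightarrow> nat" where
  "state_index [] = 0"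
| "state_index (x # xs) = of_bool x + 2 * state_index xs"

definition states :: "bool list list" where
  "states = List.n_lists 6 [False, True]"

definition table_weight :: "int list \<Rightarrow> bool list \<Rightarrow> int" where
  "table_weight T b = T ! state_index b"

definition transfer_table :: "nat \<Rightarrow> int list \<Rightarrow> int list" where
  "transfer_table k T = map (transfer k (table_weight T)) states"

definition final_table :: "int list" where
  "final_table = map all_free_dominated states"

definition code_table :: "nat list \<Rightarrow> int list" where
  "code_table ks = foldr transfer_table ks final_table"

lemma nth_concat_pairs:
  "i < length L \<Longrightarrow> concat (map (\<lambda>ys. [False # ys, True # ys]) L) ! (of_bool x + 2 * i) = x # L ! i"
  by (induction L arbitrary: i) (auto simp: nth_append less_Suc_eq_0_disj)

lemma length_concat_pairs: "length (concat (map (\<lambda>ys. [False # ys, True # ys]) L)) = 2 * length L"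
  by (induction L) auto

lemma n_lists_nth_state_index:
  "state_index b < length (List.n_lists (length b) [False, True]) \<and>
   List.n_lists (length b) [False, True] ! state_index b = b"
proof (induction b)
  case (Cons x b)
  let ?L = "List.n_lists (length b) [False, True]"
  from Cons.IH have "state_index b < length ?L" "?L ! state_index b = b" by simp_all
  then show ?case using nth_concat_pairs[of "state_index b" ?L x] by (auto simp: length_concat_pairs)
qed simp

lemma table_weight_map: "length b = 6 \<Longrightarrow> table_weight (map f states) b = f b"
  using n_lists_nth_state_index[of b] by (simp add: table_weight_def states_def)

lemma length_coverage: "length (coverage c M) = 6"
  by (simp add: coverage_def)

lemma weighted_count_cong:
  assumes "\<And>b. length b = 6 \<Longrightarrow> w b = w' b"
  shows "weighted_count s w = weighted_count s w'"
  using assms length_coverage by (cases s) simp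

lemma weighted_count_lincomb:
  "weighted_count s (\<lambda>b. \<Sum>i<n. a i * f i b) = (\<Sum>i<n. a i * weighted_count s (f i))"
  by (cases s) (simp add: sum_distrib_left sum.swap[of _ "{..<n}"])

lemma table_weight_transfer_table:
  "length b = 6 \<Longrightarrow> table_weight (transfer_table k T) b = transfer k (table_weight T) b"
  by (simp add: transfer_table_def table_weight_map)

lemma Psi_chain_code_table:
  assumes "\<And>i. kf i \<in> {2..4}"
  shows "int (Psi (chain_graph (map kf [0..<m + j]))) =
    weighted_count (chain_state kf m) (table_weight (code_table (map kf [m..<m + j])))"
proof (induction j arbitrary: m)
  case 0
  have "int (Psi (chain_graph (map kf [0..<m]))) = weighted_count (chain_state kf m) all_free_dominated"
    using Psi_eq_weighted_count[OF wf_chain_state[OF assms]] by (simp add: fst_chain_state)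
  also have "\<dots> = weighted_count (chain_state kf m) (table_weight final_table)"
    by (rule weighted_count_cong) (simp add: final_table_def table_weight_map)
  finally show ?case by (simp add: code_table_def)
next
  case (Suc j)
  let ?T = "code_table (map kf [Suc m..<Suc m + j])"
  have codes: "map kf [m..<m + Suc j] = kf m # map kf [Suc m..<Suc m + j]"
    by (simp add: upt_rec)
  have "int (Psi (chain_graph (map kf [0..<m + Suc j]))) = weighted_count (chain_state kf (Suc m)) (table_weight ?T)"
    using Suc.IH[of "Suc m"] by simp
  also have "\<dots> = weighted_count (chain_state kf m) (transfer (kf m) (table_weight ?T))"
    using weighted_count_attach_transfer[OF wf_chain_state[OF assms] assms] by (simp add: chain_state_Suc)
  also have "\<dots> = weighted_count (chain_state kf m) (table_weight (transfer_table (kf m) ?T))"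
    by (rule weighted_count_cong) (simp add: table_weight_transfer_table)
  also have "\<dots> = weighted_count (chain_state kf m) (table_weight (code_table (map kf [m..<m + Suc j])))"
    by (simp only: codes code_table_def foldr.simps comp_apply)
  finally show ?case .
qed

definition satisfies_recurrence :: "int list \<Rightarrow> int list list \<Rightarrow> bool" where
  "satisfies_recurrence c Ts \<longleftrightarrow>
    (\<forall>b\<in>set states. table_weight (Ts ! length c) b = (\<Sum>i<length c. c!i * table_weight (Ts ! i) b))"

lemma mem_states: "length b = 6 \<Longrightarrow> b \<in> set states"
  by (auto simp: states_def set_n_lists)

lemma Psi_chain_recurrence:
  assumes codes: "\<And>i. kf i \<in> {2..4}"
    and tables: "\<And>j. j \<le> length c \<Longrightarrow> Ts ! j = code_table (map kf [m..<m + Suc j])"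
    and rec: "satisfies_recurrence c Ts"
  shows "int (Psi (chain_graph (map kf [0..<m + Suc (length c)]))) =
    (\<Sum>i<length c. c!i * int (Psi (chain_graph (map kf [0..<m + Suc i]))))"
proof -
  let ?d = "length c" and ?W = "weighted_count (chain_state kf m)"
  have Psi_eq: "int (Psi (chain_graph (map kf [0..<m + Suc j]))) = ?W (table_weight (Ts ! j))" if "j \<le> ?d" for j
    using Psi_chain_code_table[OF codes, where m = m and j = "Suc j"] tables[OF that] by simp
  have "int (Psi (chain_graph (map kf [0..<m + Suc ?d]))) = ?W (table_weight (Ts ! ?d))"
    by (rule Psi_eq) simp
  also have "\<dots> = ?W (\<lambda>b. \<Sum>i<?d. c!i * table_weight (Ts ! i) b)"
    using rec mem_states by (intro weighted_count_cong) (simp add: satisfies_recurrence_def)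
  also have "\<dots> = (\<Sum>i<?d. c!i * ?W (table_weight (Ts ! i)))"
    by (rule weighted_count_lincomb)
  also have "\<dots> = (\<Sum>i<?d. c!i * int (Psi (chain_graph (map kf [0..<m + Suc i]))))"
    using Psi_eq by simp
  finally show ?thesis .
qed

fun iterates :: "('a \<Rightarrow> 'a) \<Rightarrow> nat \<Rightarrow> 'a \<Rightarrow> 'a list" where
  "iterates f 0 x = [x]"
| "iterates f (Suc n) x = x # iterates f n (f x)"

lemma length_iterates [simp]: "length (iterates f n x) = Suc n"
  by (induction f n x rule: iterates.induct) simp_all

lemma nth_iterates: "i \<le> n \<Longrightarrow> iterates f n x ! i = (f ^^ i) x"
proof (induction f n x arbitrary: i rule: iterates.induct)
  case (2 f n x)
  then show ?case by (cases i) (simp_all add: funpow_swap1)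
qed simp

fun alternating :: "nat \<Rightarrow> nat \<Rightarrow> nat \<Rightarrow> nat list" where
  "alternating p q 0 = []"
| "alternating p q (Suc j) = p # alternating q p j"

lemma map_upt_alternating:
  assumes "\<And>i. kf (m + i) = (if even i then p else q)"
  shows "map kf [m..<m + j] = alternating p q j"
  using assms
proof (induction j arbitrary: m p q)
  case (Suc j)
  have "kf (Suc m + i) = (if even i then q else p)" for i
    using Suc.prems[of "Suc i"] by simp
  then have "map kf [Suc m..<Suc m + j] = alternating q p j" by (rule Suc.IH)
  moreover have "[m..<m + Suc j] = m # [Suc m..<Suc m + j]" by (simp add: upt_rec)
  ultimately have "map kf [m..<m + Suc j] = kf m # alternating q p j" by (simp only: list.map)
  with Suc.prems[of 0] show ?case by simp
qed simp

text \<open>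
  The tables for the codes \<open>p, q, p, \<dots>\<close> are computed together with those for \<open>q, p, q, \<dots>\<close>,
  which feed the next step; iterating on pairs computes each table once.
\<close>

fun transfer_table_pair :: "nat \<Rightarrow> nat \<Rightarrow> int list \<times> int list \<Rightarrow> int list \<times> int list" where
  "transfer_table_pair p q (T, T') = (transfer_table p T', transfer_table q T)"

lemma code_table_alternating:
  "(code_table (alternating p q j), code_table (alternating q p j)) =
    (transfer_table_pair p q ^^ j) (final_table, final_table)"
proof (induction j arbitrary: p q)
  case (Suc j)
  have "(transfer_table_pair p q ^^ Suc j) (final_table, final_table) =
      transfer_table_pair p q (code_table (alternating p q j), code_table (alternating q p j))"
    by (simp add: Suc.IH)
  then show ?case by (simp add: code_table_def)
qed (simp add: code_table_def)

lemma Psi_recurrence_alternating: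
  assumes codes: "\<And>i. kf i \<in> {2..4}" and alternating: "\<And>i. kf (m + i) = (if even i then p else q)"
    and rec: "satisfies_recurrence c (map fst (iterates (transfer_table_pair p q) d
      (transfer_table_pair p q (final_table, final_table))))"
    and d: "length c = d"
  shows "int (Psi (chain_graph (map kf [0..<m + Suc (length c)]))) =
    (\<Sum>i<length c. c!i * int (Psi (chain_graph (map kf [0..<m + Suc i]))))"
proof (rule Psi_chain_recurrence[OF codes _ rec])
  fix j assume "j \<le> length c"
  with d have "map fst (iterates (transfer_table_pair p q) d (transfer_table_pair p q (final_table, final_table))) ! j
      = fst ((transfer_table_pair p q ^^ Suc j) (final_table, final_table))"
    by (simp add: nth_iterates funpow_Suc_right del: funpow.simps)
  also have "\<dots> = code_table (alternating p q (Suc j))"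
    by (simp flip: code_table_alternating del: funpow.simps)
  also have "\<dots> = code_table (map kf [m..<m + Suc j])"
    by (simp only: map_upt_alternating[OF alternating])
  finally show "map fst (iterates (transfer_table_pair p q) d (transfer_table_pair p q (final_table, final_table))) ! j
      = code_table (map kf [m..<m + Suc j])" .
qed

section \<open>Growth rates of the chains\<close>

definition recurrence_poly :: "int list \<Rightarrow> real \<Rightarrow> real" where
  "recurrence_poly c t = t ^ length c - (\<Sum>i<length c. of_int (c!i) * t ^ i)"

lemma chain_growth_rate:
  assumes codes: "\<And>i. kf i \<in> {2..4}"
    and rec: "\<And>m. 1 \<le> m \<Longrightarrow> int (Psi (chain_graph (map kf [0..<m + Suc (length c)]))) =
      (\<Sum>i<length c. c!i * int (Psi (chain_graph (map kf [0..<m + Suc i]))))"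
    and nonneg: "\<forall>x\<in>set c. 0 \<le> x" and "c \<noteq> []"
    and bounds: "0 < \<epsilon>" "\<epsilon> < x" "recurrence_poly c (x - \<epsilon>) < 0" "0 < recurrence_poly c (x + \<epsilon>)"
  shows "(\<lambda>n. root n (real (Psi (chain_graph (map kf [0..<n - 1]))))) \<longlonglongrightarrow> largest_real_root (recurrence_poly c) \<and>
    \<bar>largest_real_root (recurrence_poly c) - x\<bar> < \<epsilon>"
proof -
  let ?d = "length c" and ?r = "largest_real_root (recurrence_poly c)"
  define a where "a n = real (Psi (chain_graph (map kf [0..<n - 1])))" for n
  define cf where "cf i = real_of_int (c!i)" for i
  have poly: "recurrence_poly c = (\<lambda>t. t ^ ?d - (\<Sum>i<?d. cf i * t ^ i))"
    by (simp add: fun_eq_iff recurrence_poly_def cf_def)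
  have cf: "0 \<le> cf i" if "i < ?d" for i
    using nonneg that by (simp add: cf_def)
  have "0 < x - \<epsilon>" "x - \<epsilon> < x + \<epsilon>" using bounds by simp_all
  then have root: "x - \<epsilon> < ?r \<and> ?r < x + \<epsilon> \<and> recurrence_poly c ?r = 0"
    using largest_real_root_in_interval[OF cf _ _ bounds(3,4)[unfolded poly]] by (simp add: poly)
  have pos: "0 < a n" for n
  proof -
    have "wf_state (chain_state kf (n - 1))" using codes by (rule wf_chain_state)
    then have "finite (fst (chain_state kf (n - 1)))" by (cases "chain_state kf (n - 1)") simp
    then have "1 \<le> Psi (fst (chain_state kf (n - 1)))" by (rule Psi_ge_1)
    then show ?thesis by (simp add: a_def fst_chain_state)
  qed
  have rec_a: "a (n + ?d) = (\<Sum>i<?d. cf i * a (n + i))" if "3 \<le> n" for n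
  proof -
    have idx: "n + ?d - 1 = (n - 2) + Suc ?d" "\<And>i. n + i - 1 = (n - 2) + Suc i" using that by auto
    have "real_of_int (int (Psi (chain_graph (map kf [0..<(n - 2) + Suc ?d])))) =
        real_of_int (\<Sum>i<?d. c!i * int (Psi (chain_graph (map kf [0..<(n - 2) + Suc i]))))"
      using rec[of "n - 2"] that by (simp only:)
    then show ?thesis unfolding a_def cf_def idx by simp
  qed
  have "(\<lambda>n. root n (a n)) \<longlonglongrightarrow> ?r"
  proof (rule root_tendsto_of_linear_recurrence[OF pos _ cf rec_a])
    show "0 < ?d" using \<open>c \<noteq> []\<close> by simp
    show "0 < ?r" using root bounds by linarith
    show "?r ^ ?d = (\<Sum>i<?d. cf i * ?r ^ i)" using root by (simp add: poly)
  qed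
  with root show ?thesis by (simp add: a_def abs_less_iff)
qed

definition L_codes :: "nat \<Rightarrow> nat" where
  "L_codes i = 3"

definition Z_codes :: "nat \<Rightarrow> nat" where
  "Z_codes i = (if i = 0 then 3 else if odd i then 2 else 4)"

definition H_codes :: "nat \<Rightarrow> nat" where
  "H_codes i = (if i = 0 then 3 else 2)"

lemma L_chain_eq: "L_chain n = chain_graph (map L_codes [0..<n - 1])"
  by (simp add: L_chain_def L_codes_def[abs_def] map_replicate_const)

lemma Z_chain_eq: "Z_chain n = chain_graph (map Z_codes [0..<n - 1])"
  by (simp add: Z_chain_def Z_codes_def[abs_def])

lemma H_chain_eq: "H_chain n = chain_graph (map H_codes [0..<n - 1])"
  by (simp add: H_chain_def H_codes_def[abs_def])

lemma L_tables_recurrence: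
  "satisfies_recurrence [1, 1, 0, 0, 4]
    (map fst (iterates (transfer_table_pair 3 3) 5 (transfer_table_pair 3 3 (final_table, final_table))))"
  by code_simp

lemma H_tables_recurrence:
  "satisfies_recurrence [2, 4, 7, 6, 12, 7, 1]
    (map fst (iterates (transfer_table_pair 2 2) 7 (transfer_table_pair 2 2 (final_table, final_table))))"
  by code_simp

lemma Z_tables_recurrence_odd:
  "satisfies_recurrence [1, 5, 7, 7, 6, 1, 3]
    (map fst (iterates (transfer_table_pair 2 4) 7 (transfer_table_pair 2 4 (final_table, final_table))))"
  by code_simp

lemma Z_tables_recurrence_even:
  "satisfies_recurrence [1, 5, 7, 7, 6, 1, 3]
    (map fst (iterates (transfer_table_pair 4 2) 7 (transfer_table_pair 4 2 (final_table, final_table))))"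
  by code_simp

lemma L_growth:
  "(\<lambda>n. root n (real (Psi (L_chain n)))) \<longlonglongrightarrow> largest_real_root (\<lambda>t. t^5 - 4*t^4 - t - 1) \<and>
   \<bar>largest_real_root (\<lambda>t. t^5 - 4*t^4 - t - 1) - 4.01923\<bar> < 0.000005"
proof -
  let ?c = "[1, 1, 0, 0, 4] :: int list"
  have poly: "(\<lambda>t::real. t^5 - 4*t^4 - t - 1) = recurrence_poly ?c"
    by (simp add: fun_eq_iff recurrence_poly_def lessThan_nat_numeral power_numeral_reduce)
  have codes: "L_codes i \<in> {2..4}" for i by (simp add: L_codes_def)
  have "int (Psi (chain_graph (map L_codes [0..<m + Suc (length ?c)]))) =
      (\<Sum>i<length ?c. ?c ! i * int (Psi (chain_graph (map L_codes [0..<m + Suc i]))))" for m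
    by (rule Psi_recurrence_alternating[OF codes _ L_tables_recurrence]) (simp_all add: L_codes_def)
  from chain_growth_rate[OF codes this, where x = "4.01923" and \<epsilon> = "0.000005"]
  show ?thesis by (simp add: L_chain_eq poly recurrence_poly_def lessThan_nat_numeral)
qed

lemma Z_growth:
  "(\<lambda>n. root n (real (Psi (Z_chain n)))) \<longlonglongrightarrow>
     largest_real_root (\<lambda>t. t^7 - 3*t^6 - t^5 - 6*t^4 - 7*t^3 - 7*t^2 - 5*t - 1) \<and>
   \<bar>largest_real_root (\<lambda>t. t^7 - 3*t^6 - t^5 - 6*t^4 - 7*t^3 - 7*t^2 - 5*t - 1) - 3.83256\<bar> < 0.000005"
proof -
  let ?c = "[1, 5, 7, 7, 6, 1, 3] :: int list"
  have poly: "(\<lambda>t::real. t^7 - 3*t^6 - t^5 - 6*t^4 - 7*t^3 - 7*t^2 - 5*t - 1) = recurrence_poly ?c"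
    by (simp add: fun_eq_iff recurrence_poly_def lessThan_nat_numeral power_numeral_reduce)
  have codes: "Z_codes i \<in> {2..4}" for i by (simp add: Z_codes_def)
  have "int (Psi (chain_graph (map Z_codes [0..<m + Suc (length ?c)]))) =
      (\<Sum>i<length ?c. ?c ! i * int (Psi (chain_graph (map Z_codes [0..<m + Suc i]))))" if "1 \<le> m" for m
  proof (cases "odd m")
    case True
    show ?thesis
      by (rule Psi_recurrence_alternating[OF codes _ Z_tables_recurrence_odd]) (use that True in \<open>simp_all add: Z_codes_def\<close>)
  next
    case False
    show ?thesis
      by (rule Psi_recurrence_alternating[OF codes _ Z_tables_recurrence_even]) (use that False in \<open>simp_all add: Z_codes_def\<close>)
  qed
  from chain_growth_rate[OF codes this, where x = "3.83256" and \<epsilon> = "0.000005"]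
  show ?thesis by (simp add: Z_chain_eq poly recurrence_poly_def lessThan_nat_numeral)
qed

lemma H_growth:
  "(\<lambda>n. root n (real (Psi (H_chain n)))) \<longlonglongrightarrow>
     largest_real_root (\<lambda>t. t^7 - t^6 - 7*t^5 - 12*t^4 - 6*t^3 - 7*t^2 - 4*t - 2) \<and>
   \<bar>largest_real_root (\<lambda>t. t^7 - t^6 - 7*t^5 - 12*t^4 - 6*t^3 - 7*t^2 - 4*t - 2) - 3.81063\<bar> < 0.000005"
proof -
  let ?c = "[2, 4, 7, 6, 12, 7, 1] :: int list"
  have poly: "(\<lambda>t::real. t^7 - t^6 - 7*t^5 - 12*t^4 - 6*t^3 - 7*t^2 - 4*t - 2) = recurrence_poly ?c"
    by (simp add: fun_eq_iff recurrence_poly_def lessThan_nat_numeral power_numeral_reduce)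
  have codes: "H_codes i \<in> {2..4}" for i by (simp add: H_codes_def)
  have "int (Psi (chain_graph (map H_codes [0..<m + Suc (length ?c)]))) =
      (\<Sum>i<length ?c. ?c ! i * int (Psi (chain_graph (map H_codes [0..<m + Suc i]))))" if "1 \<le> m" for m
    by (rule Psi_recurrence_alternating[OF codes _ H_tables_recurrence]) (use that in \<open>simp_all add: H_codes_def\<close>)
  from chain_growth_rate[OF codes this, where x = "3.81063" and \<epsilon> = "0.000005"]
  show ?thesis by (simp add: H_chain_eq poly recurrence_poly_def lessThan_nat_numeral)
qed

theorem mainTheorem9:
  fixes rL rZ rH :: real
  defines "rL \<equiv> largest_real_root (\<lambda>t. t^5 - 4*t^4 - t - 1)"
      and "rZ \<equiv> largest_real_root (\<lambda>t. t^7 - 3*t^6 - t^5 - 6*t^4 - 7*t^3 - 7*t^2 - 5*t - 1)"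
      and "rH \<equiv> largest_real_root (\<lambda>t. t^7 - t^6 - 7*t^5 - 12*t^4 - 6*t^3 - 7*t^2 - 4*t - 2)"
  shows "((\<lambda>n. root n (real (Psi (L_chain n)))) \<longlonglongrightarrow> rL) \<and>
         ((\<lambda>n. root n (real (Psi (Z_chain n)))) \<longlonglongrightarrow> rZ) \<and>
         ((\<lambda>n. root n (real (Psi (H_chain n)))) \<longlonglongrightarrow> rH) \<and>
         \<bar>rL - 4.01923\<bar> < 0.000005 \<and>
         \<bar>rZ - 3.83256\<bar> < 0.000005 \<and>
         \<bar>rH - 3.81063\<bar> < 0.000005"
  using L_growth Z_growth H_growth unfolding rL_def rZ_def rH_def by blast

end
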